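(* Let $p$ be an odd prime, $q=p^m$, $q=et+1$ with integers $e\geq 2,t\geq 1$, $R_{e,q}=\mathbb{F}_q[u]/\langle u^e-1\rangle$ with orthogonal idempotents $\mu_1,\dots,\mu_e$ (see context), and assume $\gcd(n,q)=1$. Let $\mathcal{C}=\bigoplus_{i=1}^e\mu_i\mathcal{C}_i$ be a cyclic code of length $n$ over $R_{e,q}$, where $\mathcal{C}_i=\langle g_i(x)\rangle$ is a cyclic code of length $n$ over $\mathbb{F}_q$ with $g_i(x)$ a monic divisor of $x^n-1$, for $1\leq i\leq e$. Then $\mathcal{C}$ is an LCD code if and only if $g_i(x)$ is a self-reciprocal polynomial over $\mathbb{F}_q$ for every $1\leq i\leq e$.
   Context: Write $u^e-1=\prod_{i=1}^e(u-\alpha_i)$ over $\mathbb{F}_q$, $G_i=u-\alpha_i$, $\widehat{G}_i=(u^e-1)/G_i$, $z_iG_i+h_i\widehat{G}_i=1$, $\mu_i=h_i\widehat{G}_i$; these are pairwise orthogonal idempotents summing to $1$. For a linear code $\mathcal{C}\subseteq R_{e,q}^n$, $\mathcal{C}_i=\{s_i\in\mathbb{F}_q^n:\exists\, s_j\ (j\neq i)\text{ with }\sum_{j}s_j\mu_j\in\mathcal{C}\}$ and $\mathcal{C}=\bigoplus_i\mu_i\mathcal{C}_i$. A code is LCD if $\mathcal{C}\cap\mathcal{C}^\perp=\{0\}$ (Euclidean dual). A polynomial $g$ is self-reciprocal if $x^{\deg g}g(1/x)$ equals $g$ up to a nonzero scalar. *)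

theory Defs
  imports "HOL-Computational_Algebra.Computational_Algebra"
begin

text \<open>The ring R_{e,q} = F_q[u]/(u^e - 1): elements are represented by polynomials
  reduced modulo u^e - 1.\<close>

definition ue1 :: "nat \<Rightarrow> 'a::field poly" where
  "ue1 e = monom 1 e - 1"

definition Rmod :: "nat \<Rightarrow> 'a::field poly \<Rightarrow> 'a poly" where
  "Rmod e f = f mod ue1 e"

definition Gpol :: "(nat \<Rightarrow> 'a::field) \<Rightarrow> nat \<Rightarrow> 'a poly" where
  "Gpol \<alpha> i = [:- \<alpha> i, 1:]"

definition Ghat :: "nat \<Rightarrow> (nat \<Rightarrow> 'a::field) \<Rightarrow> nat \<Rightarrow> 'a poly" where
  "Ghat e \<alpha> i = ue1 e div Gpol \<alpha> i"

definition hpol :: "nat \<Rightarrow> (nat \<Rightarrow> 'a::field) \<Rightarrow> nat \<Rightarrow> 'a poly" where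
  "hpol e \<alpha> i = (SOME h. \<exists>z. z * Gpol \<alpha> i + h * Ghat e \<alpha> i = 1)"

definition mu :: "nat \<Rightarrow> (nat \<Rightarrow> 'a::field) \<Rightarrow> nat \<Rightarrow> 'a poly" where
  "mu e \<alpha> i = Rmod e (hpol e \<alpha> i * Ghat e \<alpha> i)"

definition Rvecs :: "nat \<Rightarrow> nat \<Rightarrow> (nat \<Rightarrow> 'a::field poly) set" where
  "Rvecs e n = {v. (\<forall>j. Rmod e (v j) = v j) \<and> (\<forall>j\<ge>n. v j = 0)}"

definition Rinner :: "nat \<Rightarrow> nat \<Rightarrow> (nat \<Rightarrow> 'a::field poly) \<Rightarrow> (nat \<Rightarrow> 'a poly) \<Rightarrow> 'a poly" where
  "Rinner e n x y = Rmod e (\<Sum>j<n. x j * y j)"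

definition Rdual :: "nat \<Rightarrow> nat \<Rightarrow> (nat \<Rightarrow> 'a::field poly) set \<Rightarrow> (nat \<Rightarrow> 'a poly) set" where
  "Rdual e n C = {y \<in> Rvecs e n. \<forall>x\<in>C. Rinner e n x y = 0}"

definition is_LCD :: "nat \<Rightarrow> nat \<Rightarrow> (nat \<Rightarrow> 'a::field poly) set \<Rightarrow> bool" where
  "is_LCD e n C \<longleftrightarrow> C \<inter> Rdual e n C = {(\<lambda>j. 0)}"

text \<open>The cyclic code <g> of length n over F_q, i.e. the ideal generated by g in
  F_q[x]/(x^n - 1), as a set of coefficient vectors (indexed 0..n-1, zero beyond).\<close>

definition cyclic_code :: "nat \<Rightarrow> 'a::field poly \<Rightarrow> (nat \<Rightarrow> 'a) set" where
  "cyclic_code n g = {(\<lambda>j. coeff ((f * g) mod (monom 1 n - 1)) j) | f. True}"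

definition code_R :: "nat \<Rightarrow> (nat \<Rightarrow> 'a::field) \<Rightarrow> nat \<Rightarrow> (nat \<Rightarrow> 'a poly) \<Rightarrow> (nat \<Rightarrow> 'a poly) set" where
  "code_R e \<alpha> n g = {(\<lambda>j. Rmod e (\<Sum>i=1..e. mu e \<alpha> i * [:s i j:])) | s.
      \<forall>i\<in>{1..e}. s i \<in> cyclic_code n (g i)}"

text \<open>Self-reciprocal: x^{deg g} g(1/x) (= reflect_poly g) is a nonzero scalar multiple of g.\<close>

definition self_reciprocal :: "'a::field poly \<Rightarrow> bool" where
  "self_reciprocal g \<longleftrightarrow> (\<exists>c. c \<noteq> 0 \<and> reflect_poly g = smult c g)"

end

theory Submission
  imports Defs
begin

text \<open>Since \<open>e\<close> is a unit in \<open>F\<^sub>q\<close>, the roots of \<open>u\<^sup>e - 1\<close> are distinct,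
  and evaluating at them splits \<open>R\<^sub>e\<^sub>,\<^sub>q\<close> into \<open>e\<close> copies of \<open>F\<^sub>q\<close>;
  the Euclidean form on \<open>R\<^sup>n\<close> splits accordingly, so \<open>C\<close> is LCD iff every
  \<open>C\<^sub>i\<close> is. For a cyclic code \<open>\<langle>g\<rangle>\<close>, identify words with polynomials
  of degree \<open>< n\<close>: \<open>P\<close> is orthogonal to \<open>\<langle>g\<rangle>\<close> iff \<open>x\<^sup>n - 1\<close>
  divides \<open>g P\<^sup>*\<close>, \<open>P\<^sup>*\<close> the reversal of \<open>P\<close> in degree \<open>n - 1\<close>.
  Write \<open>x\<^sup>n - 1 = g h\<close>; this polynomial is squarefree because \<open>n\<close> is a unit.
  If \<open>g\<^sup>* = c g\<close> and \<open>P = g w\<close> is self-orthogonal, then \<open>x\<^sup>n - 1\<close> divides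
  \<open>(g w\<^sup>*)\<^sup>2\<close>, hence \<open>g w\<^sup>*\<close>, which has degree \<open>< n\<close>; so \<open>P = 0\<close>.
  Conversely, every multiple of both \<open>g\<close> and \<open>h\<^sup>*\<close> of degree \<open>< n\<close> is
  self-orthogonal, so in an LCD code \<open>g\<close> and \<open>h\<^sup>*\<close> are coprime, and
  \<open>g\<close> divides \<open>g\<^sup>* h\<^sup>* = -(x\<^sup>n - 1)\<close>, hence \<open>g\<^sup>*\<close>.\<close>

section \<open>Polynomial reversal\<close>

text \<open>\<^term>\<open>rev_poly N p\<close> is \<open>x\<^sup>N p(1/x)\<close> when \<open>degree p \<le> N\<close>;
  coefficients above \<open>N\<close> are discarded.\<close>

definition rev_poly :: "nat \<Rightarrow> 'a::comm_monoid_add poly \<Rightarrow> 'a poly" where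
  "rev_poly N p = (\<Sum>j\<le>N. monom (coeff p (N - j)) j)"

lemma coeff_rev_poly: "coeff (rev_poly N p) i = (if i \<le> N then coeff p (N - i) else 0)"
  unfolding rev_poly_def by (simp add: coeff_sum)

lemma degree_rev_poly_le: "degree (rev_poly N p) \<le> N"
  by (rule degree_le) (simp add: coeff_rev_poly)

lemma rev_poly_0 [simp]: "rev_poly N 0 = 0"
  by (simp add: rev_poly_def)

lemma rev_poly_eq_monom_mult_reflect_poly:
  "degree p \<le> N \<Longrightarrow> rev_poly N p = monom 1 (N - degree p) * reflect_poly p"
  for p :: "'a::comm_semiring_1 poly"
  by (rule poly_eqI) (auto simp: coeff_rev_poly coeff_monom_mult coeff_reflect_poly coeff_eq_0)

lemma rev_poly_eq_0_iff: "degree p \<le> N \<Longrightarrow> rev_poly N p = 0 \<longleftrightarrow> p = 0"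
  for p :: "'a::idom poly"
  by (simp add: rev_poly_eq_monom_mult_reflect_poly)

lemma rev_poly_degree: "rev_poly (degree p) p = reflect_poly (p :: 'a::comm_semiring_1 poly)"
  by (simp add: rev_poly_eq_monom_mult_reflect_poly)

lemma rev_poly_mult:
  fixes p q :: "'a::idom poly"
  assumes "degree p \<le> N" "degree q \<le> M"
  shows "rev_poly (N + M) (p * q) = rev_poly N p * rev_poly M q"
proof (cases "p = 0 \<or> q = 0")
  case True
  then show ?thesis by auto
next
  case False
  then have "degree (p * q) = degree p + degree q" by (simp add: degree_mult_eq)
  then have "rev_poly (N + M) (p * q)
      = monom 1 (N - degree p) * monom 1 (M - degree q) * (reflect_poly p * reflect_poly q)"
    using assms by (simp add: rev_poly_eq_monom_mult_reflect_poly reflect_poly_mult mult_monom)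
  then show ?thesis
    using assms by (simp add: rev_poly_eq_monom_mult_reflect_poly ac_simps)
qed

lemma coeff_mult_rev_poly: "coeff (a * rev_poly N b) N = (\<Sum>j\<le>N. coeff a j * coeff b j)"
  unfolding coeff_mult by (rule sum.cong) (auto simp: coeff_rev_poly)

section \<open>Orthogonality to a cyclic code\<close>

lemma degree_monom_1_minus_1:
  "n \<ge> 1 \<Longrightarrow> degree (monom 1 n - 1 :: 'a::comm_ring_1 poly) = n"
  unfolding diff_conv_add_uminus by (subst degree_add_eq_left) (auto simp: degree_monom_eq)

lemma monom_1_minus_1_neq_0: "n \<ge> 1 \<Longrightarrow> monom 1 n - 1 \<noteq> (0 :: 'a::comm_ring_1 poly)"
  using degree_monom_1_minus_1[of n, where 'a='a] by auto

lemma degree_mod_monom_1_minus_1: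
  "n \<ge> 1 \<Longrightarrow> degree (w mod (monom 1 n - 1 :: 'a::field poly)) < n"
  using degree_mod_less[OF monom_1_minus_1_neq_0, of n w] by (auto simp: degree_monom_1_minus_1)

lemma reflect_poly_monom_1_minus_1:
  "n \<ge> 1 \<Longrightarrow> reflect_poly (monom 1 n - 1 :: 'a::comm_ring_1 poly) = - (monom 1 n - 1)"
  by (rule poly_eqI) (auto simp: coeff_reflect_poly degree_monom_1_minus_1)

lemma coeff_mod_monom_1_minus_1:
  fixes w :: "'a::field poly"
  assumes n: "n \<ge> 1" and w: "degree w < 2 * n - 1"
  shows "coeff (w mod (monom 1 n - 1)) (n - 1) = coeff w (n - 1)"
proof -
  let ?X = "monom 1 n - 1 :: 'a poly"
  define s where "s = w div ?X"
  have "degree (?X * s) < 2 * n - 1"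
  proof -
    have "?X * s = w - w mod ?X" by (simp add: s_def minus_mod_eq_mult_div)
    moreover have "degree (w mod ?X) < 2 * n - 1"
      using degree_mod_monom_1_minus_1[OF n, of w] n by arith
    ultimately show ?thesis using w by (simp add: degree_diff_less)
  qed
  have "coeff s (n - 1) = 0"
  proof (cases "s = 0")
    case False
    then have "degree (?X * s) = n + degree s"
      using degree_mult_eq[OF monom_1_minus_1_neq_0[OF n] False]
        degree_monom_1_minus_1[OF n, where 'a='a] by (simp only:)
    then show ?thesis using \<open>degree (?X * s) < 2 * n - 1\<close> by (simp add: coeff_eq_0)
  qed simp
  then have "coeff (?X * s) (n - 1) = 0" using n by (simp add: left_diff_distrib coeff_monom_mult)
  moreover have "w = ?X * s + w mod ?X" by (simp add: s_def)
  ultimately show ?thesis by (metis add_0 coeff_add)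
qed

lemma monom_1_minus_1_dvd_iff:
  fixes Q :: "'a::field poly"
  assumes n: "n \<ge> 1"
  shows "monom 1 n - 1 dvd Q \<longleftrightarrow> (\<forall>f. coeff ((f * Q) mod (monom 1 n - 1)) (n - 1) = 0)"
proof (intro iffI allI)
  fix f
  assume "monom 1 n - 1 dvd Q"
  then have "(f * Q) mod (monom 1 n - 1) = 0" by (simp add: mod_eq_0_iff_dvd)
  then show "coeff ((f * Q) mod (monom 1 n - 1)) (n - 1) = 0" by simp
next
  let ?X = "monom 1 n - 1 :: 'a poly"
  assume vanish: "\<forall>f. coeff ((f * Q) mod ?X) (n - 1) = 0"
  have deg_rem: "degree (Q mod ?X) < n" using n by (rule degree_mod_monom_1_minus_1)
  have "coeff (Q mod ?X) k = 0" for k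
  proof (cases "k < n")
    case True
    let ?shift = "monom 1 (n - 1 - k) :: 'a poly"
    have "degree (?shift * (Q mod ?X)) \<le> (n - 1 - k) + degree (Q mod ?X)"
      using degree_mult_le[of ?shift "Q mod ?X"] degree_monom_le[of "1::'a" "n - 1 - k"] by linarith
    also have "\<dots> < 2 * n - 1" using deg_rem True by linarith
    finally have deg: "degree (?shift * (Q mod ?X)) < 2 * n - 1" .
    have "coeff (Q mod ?X) k = coeff (?shift * (Q mod ?X)) (n - 1)"
      using True by (simp add: coeff_monom_mult)
    also have "\<dots> = coeff ((?shift * (Q mod ?X)) mod ?X) (n - 1)"
      by (rule coeff_mod_monom_1_minus_1[OF n deg, symmetric])
    also have "(?shift * (Q mod ?X)) mod ?X = (?shift * Q) mod ?X"
      by (rule mod_mult_right_eq)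
    finally show ?thesis using vanish by simp
  next
    case False
    then show ?thesis using deg_rem by (simp add: coeff_eq_0)
  qed
  then have "Q mod ?X = 0" by (simp add: poly_eq_iff)
  then show "?X dvd Q" by (simp add: mod_eq_0_iff_dvd)
qed

lemma ball_cyclic_code_iff:
  "(\<forall>c\<in>cyclic_code n g. P c) \<longleftrightarrow> (\<forall>f. P (\<lambda>j. coeff ((f * g) mod (monom 1 n - 1)) j))"
  unfolding cyclic_code_def by auto

lemma orthogonal_cyclic_code_iff:
  fixes g P :: "'a::field poly"
  assumes n: "n \<ge> 1"
  shows "(\<forall>c\<in>cyclic_code n g. (\<Sum>j<n. c j * coeff P j) = 0)
    \<longleftrightarrow> monom 1 n - 1 dvd g * rev_poly (n - 1) P"
proof -
  let ?X = "monom 1 n - 1 :: 'a poly"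
  have inner_as_coeff: "(\<Sum>j<n. coeff ((f * g) mod ?X) j * coeff P j)
      = coeff ((f * (g * rev_poly (n - 1) P)) mod ?X) (n - 1)" for f
  proof -
    have "{..<n} = {..n - 1}" using n by auto
    then have "(\<Sum>j<n. coeff ((f * g) mod ?X) j * coeff P j)
        = coeff ((f * g) mod ?X * rev_poly (n - 1) P) (n - 1)"
      by (simp add: coeff_mult_rev_poly)
    also have "\<dots> = coeff (((f * g) mod ?X * rev_poly (n - 1) P) mod ?X) (n - 1)"
    proof (rule coeff_mod_monom_1_minus_1[symmetric, OF n])
      show "degree ((f * g) mod ?X * rev_poly (n - 1) P) < 2 * n - 1"
        using degree_mult_le[of "(f * g) mod ?X" "rev_poly (n - 1) P"]
          degree_mod_monom_1_minus_1[OF n, of "f * g"] degree_rev_poly_le[of "n - 1" P] by arith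
    qed
    also have "\<dots> = coeff ((f * (g * rev_poly (n - 1) P)) mod ?X) (n - 1)"
      by (simp add: mod_mult_left_eq mult.assoc)
    finally show ?thesis .
  qed
  have "(\<forall>c\<in>cyclic_code n g. (\<Sum>j<n. c j * coeff P j) = 0)
      \<longleftrightarrow> (\<forall>f. (\<Sum>j<n. coeff ((f * g) mod ?X) j * coeff P j) = 0)"
    by (simp add: ball_cyclic_code_iff)
  also have "\<dots> \<longleftrightarrow> ?X dvd g * rev_poly (n - 1) P"
    unfolding inner_as_coeff by (rule monom_1_minus_1_dvd_iff[symmetric, OF n])
  finally show ?thesis .
qed

section \<open>Squarefreeness\<close>

text \<open>Polynomials over an arbitrary field have no \<^const>\<open>gcd\<close> in the library (it needs a
  \<open>factorial_ring_gcd\<close> coefficient type), so a Bezout combination dividing both arguments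
  is obtained directly from the Euclidean algorithm.\<close>

lemma bezout_common_divisor:
  fixes a b :: "'a::euclidean_ring"
  obtains u v where "(u * a + v * b) dvd a" and "(u * a + v * b) dvd b"
proof -
  have "\<exists>u v. (u * a + v * b) dvd a \<and> (u * a + v * b) dvd b"
  proof (induction b arbitrary: a rule: measure_induct_rule[of euclidean_size])
    case (less b)
    show ?case
    proof (cases "b = 0")
      case False
      obtain u v where "(u * b + v * (a mod b)) dvd b" and "(u * b + v * (a mod b)) dvd a mod b"
        using less.IH[OF mod_size_less[OF False]] by blast
      moreover have "u * b + v * (a mod b) = v * a + (u - v * (a div b)) * b"
        by (simp add: minus_div_mult_eq_mod[symmetric] algebra_simps)
      ultimately show ?thesis by (metis dvd_mod_imp_dvd)
    qed (auto intro: exI[of _ 1])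
  qed
  then show ?thesis using that by blast
qed

lemma dvd_mult_imp_dvd_if_bezout:
  fixes a b c :: "'a::comm_ring_1"
  assumes "u * a + v * b = 1" and "a dvd b * c"
  shows "a dvd c"
proof -
  have "c = (u * a + v * b) * c" using assms(1) by simp
  also have "\<dots> = a * (u * c) + v * (b * c)" by (simp add: algebra_simps)
  finally have c: "c = a * (u * c) + v * (b * c)" .
  show ?thesis by (subst c) (intro dvd_add dvd_triv_left dvd_mult assms(2))
qed

lemma squarefree_dvd_square_imp_dvd:
  fixes x y :: "'a::euclidean_ring"
  assumes sq: "squarefree x" and dvd: "x dvd y ^ 2"
  shows "x dvd y"
proof -
  obtain u v where "(u * x + v * y) dvd x" and "(u * x + v * y) dvd y"
    by (rule bezout_common_divisor)
  moreover define d where "d = u * x + v * y"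
  ultimately have "d dvd x" and "d dvd y" by simp_all
  then obtain x' y' where x: "x = d * x'" and y: "y = d * y'" by (elim dvdE)
  have "d \<noteq> 0" using sq x by auto
  have "d * (u * x' + v * y') = u * x + v * y" by (simp add: x y algebra_simps)
  then have "d * (u * x' + v * y') = d * 1" by (simp add: d_def)
  then have bezout: "u * x' + v * y' = 1" using \<open>d \<noteq> 0\<close> by simp
  have "(u * u * x' + 2 * u * v * y') * x' + (v * v) * y' ^ 2 = (u * x' + v * y') ^ 2"
    by (simp add: power2_eq_square algebra_simps)
  then have "(u * u * x' + 2 * u * v * y') * x' + (v * v) * y' ^ 2 = 1" by (simp add: bezout)
  moreover have "x' * d dvd (y' ^ 2 * d) * d"
    using dvd by (simp add: x y power2_eq_square ac_simps)
  then have "x' dvd y' ^ 2 * d" using \<open>d \<noteq> 0\<close> by simp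
  ultimately have "x' dvd d" by (rule dvd_mult_imp_dvd_if_bezout)
  then have "x' ^ 2 dvd x"
    unfolding x power2_eq_square by (simp add: mult_dvd_mono mult.commute)
  then have "is_unit x'" by (rule squarefreeD[OF sq])
  then have "x dvd d" by (simp add: x mult_unit_dvd_iff)
  also have "d dvd y" by (simp add: y)
  finally show ?thesis .
qed

lemma squarefree_monom_1_minus_1:
  assumes char: "of_nat n \<noteq> (0::'a::field)"
  shows "squarefree (monom 1 n - 1 :: 'a poly)"
proof (rule squarefreeI)
  fix p :: "'a poly"
  assume "p ^ 2 dvd monom 1 n - 1"
  then obtain k where "monom 1 n - 1 = p ^ 2 * k" by (elim dvdE)
  then have k: "monom 1 n - 1 = p * (p * k)" by (simp add: power2_eq_square mult.assoc)
  then have "p dvd monom 1 n - 1" by simp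
  moreover have "p dvd pderiv (monom 1 n - 1)"
    by (simp only: k pderiv_mult) simp
  ultimately have "p dvd monom 1 1 * pderiv (monom 1 n - 1) - smult (of_nat n) (monom 1 n - 1)"
    by (intro dvd_diff dvd_mult) (auto simp: dvd_smult)
  also have "monom 1 1 * pderiv (monom 1 n - 1) - smult (of_nat n) (monom 1 n - 1)
      = [:of_nat n :: 'a:]"
    using char by (cases n) (simp_all add: pderiv_diff pderiv_monom mult_monom smult_diff_right
      monom_0 smult_monom)
  finally show "p dvd 1" using char by (metis dvd_trans is_unit_triv)
qed

lemma inj_on_if_squarefree_prod_linear:
  fixes \<alpha> :: "'b \<Rightarrow> 'a::idom"
  assumes "finite A" and sq: "squarefree (\<Prod>i\<in>A. [:- \<alpha> i, 1:])"
  shows "inj_on \<alpha> A"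
proof (rule inj_onI, rule ccontr)
  fix i j assume i: "i \<in> A" and j: "j \<in> A" and eq: "\<alpha> i = \<alpha> j" and "i \<noteq> j"
  have "(\<Prod>l\<in>{i, j}. [:- \<alpha> l, 1:]) dvd (\<Prod>l\<in>A. [:- \<alpha> l, 1:])"
    using \<open>finite A\<close> i j by (intro prod_dvd_prod_subset) auto
  then have "[:- \<alpha> i, 1:] ^ 2 dvd (\<Prod>l\<in>A. [:- \<alpha> l, 1:])"
    using \<open>i \<noteq> j\<close> eq by (simp add: power2_eq_square)
  then have "[:- \<alpha> i, 1:] dvd 1" by (rule squarefreeD[OF sq])
  then show False using dvd_imp_degree_le[of "[:- \<alpha> i, 1:]" 1] by simp
qed

section \<open>Self-reciprocal generators and LCD cyclic codes\<close>

lemma cyclic_code_eq_image: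
  fixes g :: "'a::field poly"
  assumes n: "n \<ge> 1" and g: "g dvd monom 1 n - 1"
  shows "cyclic_code n g = coeff ` {P. g dvd P \<and> degree P < n}"
proof (intro equalityI subsetI)
  fix c assume "c \<in> cyclic_code n g"
  then obtain f where c: "c = coeff ((f * g) mod (monom 1 n - 1))"
    unfolding cyclic_code_def by auto
  have "g dvd (f * g) mod (monom 1 n - 1)" using g by (simp add: dvd_mod_iff)
  then show "c \<in> coeff ` {P. g dvd P \<and> degree P < n}"
    using c degree_mod_monom_1_minus_1[OF n] by blast
next
  fix c assume "c \<in> coeff ` {P. g dvd P \<and> degree P < n}"
  then obtain P where c: "c = coeff P" and "g dvd P" and "degree P < n" by blast
  from \<open>g dvd P\<close> obtain w where "P = w * g" by (metis dvd_def mult.commute)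
  with \<open>degree P < n\<close> have "P = (w * g) mod (monom 1 n - 1)"
    using n by (simp add: mod_poly_less degree_monom_1_minus_1)
  then show "c \<in> cyclic_code n g" unfolding cyclic_code_def c by blast
qed

definition is_LCD_code :: "nat \<Rightarrow> (nat \<Rightarrow> 'a::comm_semiring_1) set \<Rightarrow> bool" where
  "is_LCD_code n C \<longleftrightarrow> (\<forall>c\<in>C. (\<forall>c'\<in>C. (\<Sum>j<n. c' j * c j) = 0) \<longrightarrow> c = (\<lambda>j. 0))"

lemma all_components_orthogonal_iff_is_LCD_code:
  fixes C :: "'i \<Rightarrow> (nat \<Rightarrow> 'a::comm_semiring_1) set"
  assumes zero: "\<forall>i\<in>I. (\<lambda>j. 0) \<in> C i"
  shows "(\<forall>s. (\<forall>i\<in>I. s i \<in> C i) \<longrightarrow>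
      (\<forall>k\<in>I. \<forall>c\<in>C k. (\<Sum>j<n. c j * s k j) = 0) \<longrightarrow> (\<forall>k\<in>I. s k = (\<lambda>j. 0)))
    \<longleftrightarrow> (\<forall>k\<in>I. is_LCD_code n (C k))"
proof
  assume H: "\<forall>s. (\<forall>i\<in>I. s i \<in> C i) \<longrightarrow>
    (\<forall>k\<in>I. \<forall>c\<in>C k. (\<Sum>j<n. c j * s k j) = 0) \<longrightarrow> (\<forall>k\<in>I. s k = (\<lambda>j. 0))"
  show "\<forall>k\<in>I. is_LCD_code n (C k)" unfolding is_LCD_code_def
  proof (intro ballI impI)
    fix k c assume k: "k \<in> I" and c: "c \<in> C k" and orth: "\<forall>c'\<in>C k. (\<Sum>j<n. c' j * c j) = 0"
    let ?s = "(\<lambda>_ _. 0)(k := c)"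
    have "\<forall>i\<in>I. ?s i \<in> C i" using c zero by auto
    moreover have "\<forall>k'\<in>I. \<forall>c'\<in>C k'. (\<Sum>j<n. c' j * ?s k' j) = 0" using orth by auto
    ultimately have "\<forall>k'\<in>I. ?s k' = (\<lambda>j. 0)" using H by blast
    from this[rule_format, OF k] show "c = (\<lambda>j. 0)" by simp
  qed
qed (auto simp: is_LCD_code_def)

text \<open>By \<open>orthogonal_cyclic_code_iff\<close>, this says that the coefficient vector of \<open>P\<close>
  lies in the hull of the cyclic code generated by \<open>g\<close>.\<close>

definition in_cyclic_hull :: "nat \<Rightarrow> 'a::field poly \<Rightarrow> 'a poly \<Rightarrow> bool" where
  "in_cyclic_hull n g P \<longleftrightarrow>
     g dvd P \<and> degree P < n \<and> monom 1 n - 1 dvd g * rev_poly (n - 1) P"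

lemma is_LCD_cyclic_code_iff:
  fixes g :: "'a::field poly"
  assumes n: "n \<ge> 1" and g: "g dvd monom 1 n - 1"
  shows "is_LCD_code n (cyclic_code n g) \<longleftrightarrow> (\<forall>P. in_cyclic_hull n g P \<longrightarrow> P = 0)"
proof -
  have "is_LCD_code n (cyclic_code n g) \<longleftrightarrow> (\<forall>P. g dvd P \<and> degree P < n \<longrightarrow>
      (\<forall>c'\<in>cyclic_code n g. (\<Sum>j<n. c' j * coeff P j) = 0) \<longrightarrow> coeff P = (\<lambda>j. 0))"
    unfolding is_LCD_code_def by (subst (1) cyclic_code_eq_image[OF n g]) auto
  also have "\<dots> \<longleftrightarrow> (\<forall>P. in_cyclic_hull n g P \<longrightarrow> P = 0)"
    by (auto simp: in_cyclic_hull_def orthogonal_cyclic_code_iff[OF n] fun_eq_iff poly_eq_iff)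
  finally show ?thesis .
qed

lemma in_cyclic_hull_self_reciprocal_eq_0:
  fixes g :: "'a::field poly"
  assumes sq: "squarefree (monom 1 n - 1 :: 'a poly)" and "self_reciprocal g"
    and hull: "in_cyclic_hull n g P"
  shows "P = 0"
proof (rule ccontr)
  assume "P \<noteq> 0"
  obtain c where "c \<noteq> 0" and c: "reflect_poly g = smult c g"
    using \<open>self_reciprocal g\<close> unfolding self_reciprocal_def by blast
  obtain w where P: "P = g * w" using hull unfolding in_cyclic_hull_def by blast
  with \<open>P \<noteq> 0\<close> have "g \<noteq> 0" "w \<noteq> 0" by auto
  then have deg: "degree g + degree w < n"
    using hull by (simp add: P in_cyclic_hull_def degree_mult_eq)
  define w' where "w' = rev_poly (n - 1 - degree g) w"
  have "rev_poly (n - 1) P = rev_poly (degree g + (n - 1 - degree g)) (g * w)"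
    using deg by (simp add: P)
  also have "\<dots> = rev_poly (degree g) g * w'"
    unfolding w'_def using deg by (intro rev_poly_mult) auto
  also have "\<dots> = smult c g * w'" by (simp add: rev_poly_degree c)
  finally have "monom 1 n - 1 dvd smult c (g * g * w')"
    using hull by (simp add: in_cyclic_hull_def ac_simps)
  then have "monom 1 n - 1 dvd g * g * w'" using \<open>c \<noteq> 0\<close> by (rule dvd_smult_cancel)
  then have "monom 1 n - 1 dvd (g * g * w') * w'" by (rule dvd_mult2)
  then have "monom 1 n - 1 dvd (g * w') ^ 2" by (simp add: power2_eq_square ac_simps)
  then have "monom 1 n - 1 dvd g * w'" by (rule squarefree_dvd_square_imp_dvd[OF sq])
  moreover have "degree (g * w') < n"
    using deg degree_mult_le[of g w'] degree_rev_poly_le[of "n - 1 - degree g" w]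
    unfolding w'_def by linarith
  ultimately have "g * w' = 0"
    using deg by (auto dest: dvd_imp_degree_le simp: degree_monom_1_minus_1)
  then show False
    using \<open>g \<noteq> 0\<close> \<open>w \<noteq> 0\<close> deg by (simp add: w'_def rev_poly_eq_0_iff)
qed

lemma coeff_0_neq_0_if_dvd_monom_1_minus_1:
  fixes g :: "'a::idom poly"
  assumes "n \<ge> 1" and "g dvd monom 1 n - 1"
  shows "coeff g 0 \<noteq> 0"
proof
  assume "coeff g 0 = 0"
  obtain h where "monom 1 n - 1 = g * h" using assms(2) by (elim dvdE)
  then have "coeff (monom 1 n - 1 :: 'a poly) 0 = coeff g 0 * coeff h 0" by (simp add: coeff_mult_0)
  then show False using \<open>coeff g 0 = 0\<close> assms(1) by simp
qed

lemma self_reciprocal_if_dvd_reflect_poly: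
  fixes g :: "'a::field poly"
  assumes "coeff g 0 \<noteq> 0" and "g dvd reflect_poly g"
  shows "self_reciprocal g"
proof -
  obtain k where k: "reflect_poly g = g * k" using assms(2) by (elim dvdE)
  have "g \<noteq> 0" using assms(1) by auto
  then have "k \<noteq> 0" using k by auto
  have "degree g + degree k = degree g"
    using k \<open>g \<noteq> 0\<close> \<open>k \<noteq> 0\<close> assms(1) by (metis degree_mult_eq degree_reflect_poly_eq)
  then obtain c where "k = [:c:]" by (auto elim: degree_eq_zeroE)
  then have "reflect_poly g = smult c g" and "c \<noteq> 0" using k \<open>k \<noteq> 0\<close> by simp_all
  then show ?thesis unfolding self_reciprocal_def by blast
qed

lemma in_cyclic_hullI:
  fixes g h w :: "'a::field poly"
  assumes n: "n \<ge> 1" and X: "g * h = monom 1 n - 1"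
    and dvd: "g dvd reflect_poly h * w" and deg: "degree (reflect_poly h * w) < n"
  shows "in_cyclic_hull n g (reflect_poly h * w)"
proof (cases "w = 0")
  case False
  have "h dvd monom 1 n - 1" using X by (metis dvd_triv_right)
  then have "coeff h 0 \<noteq> 0" using n by (intro coeff_0_neq_0_if_dvd_monom_1_minus_1)
  then have deg_rh: "degree (reflect_poly h) = degree h" and "h \<noteq> 0" by auto
  then have deg_sum: "degree h + degree w < n" using deg False by (simp add: degree_mult_eq)
  then have "n - 1 = degree h + (n - 1 - degree h)" by simp
  then have "rev_poly (n - 1) (reflect_poly h * w)
      = rev_poly (degree h + (n - 1 - degree h)) (reflect_poly h * w)" by simp
  also have "\<dots> = rev_poly (degree h) (reflect_poly h) * rev_poly (n - 1 - degree h) w"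
    using deg_rh deg_sum by (intro rev_poly_mult) auto
  also have "rev_poly (degree h) (reflect_poly h) = h"
    using deg_rh rev_poly_degree[of "reflect_poly h"] \<open>coeff h 0 \<noteq> 0\<close> by simp
  finally have "g * rev_poly (n - 1) (reflect_poly h * w)
      = (monom 1 n - 1) * rev_poly (n - 1 - degree h) w"
    using X by (simp add: mult.assoc)
  then show ?thesis using dvd deg unfolding in_cyclic_hull_def by simp
qed (use n in \<open>simp add: in_cyclic_hull_def\<close>)

lemma is_unit_common_divisor_if_cyclic_hull_trivial:
  fixes g h d :: "'a::field poly"
  assumes n: "n \<ge> 1" and X: "g * h = monom 1 n - 1"
    and trivial: "\<forall>P. in_cyclic_hull n g P \<longrightarrow> P = 0"
    and "d dvd g" and "d dvd reflect_poly h"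
  shows "is_unit d"
proof (rule ccontr)
  assume "\<not> is_unit d"
  obtain g' r' where g': "g = d * g'" and r': "reflect_poly h = d * r'"
    using \<open>d dvd g\<close> \<open>d dvd reflect_poly h\<close> by (elim dvdE)
  have "coeff g 0 \<noteq> 0"
    using n by (rule coeff_0_neq_0_if_dvd_monom_1_minus_1) (simp add: X[symmetric])
  have "coeff h 0 \<noteq> 0"
    using n by (rule coeff_0_neq_0_if_dvd_monom_1_minus_1) (simp add: X[symmetric])
  have "g \<noteq> 0" "d \<noteq> 0" "g' \<noteq> 0" "r' \<noteq> 0"
    using \<open>coeff g 0 \<noteq> 0\<close> \<open>coeff h 0 \<noteq> 0\<close> g' r' by auto
  with \<open>\<not> is_unit d\<close> have "degree d > 0" by (simp add: is_unit_iff_degree)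
  have "degree (reflect_poly h) = degree d + degree r'"
    using r' \<open>d \<noteq> 0\<close> \<open>r' \<noteq> 0\<close> by (simp add: degree_mult_eq)
  then have "degree r' < degree h" using \<open>degree d > 0\<close> \<open>coeff h 0 \<noteq> 0\<close> by simp
  moreover have "degree g + degree h = n"
    using X n \<open>coeff g 0 \<noteq> 0\<close> \<open>coeff h 0 \<noteq> 0\<close>
    by (metis degree_mult_eq degree_monom_1_minus_1 coeff_0)
  moreover have "reflect_poly h * g' = g * r'" by (simp add: g' r' ac_simps)
  ultimately have "in_cyclic_hull n g (reflect_poly h * g')"
    using n X \<open>g \<noteq> 0\<close> \<open>r' \<noteq> 0\<close> by (intro in_cyclic_hullI) (auto simp: degree_mult_eq)
  then have "reflect_poly h * g' = 0" using trivial by blast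
  then show False using \<open>g' \<noteq> 0\<close> \<open>coeff h 0 \<noteq> 0\<close> by auto
qed

lemma self_reciprocal_if_cyclic_hull_trivial:
  fixes g :: "'a::field poly"
  assumes n: "n \<ge> 1" and g: "g dvd monom 1 n - 1"
    and trivial: "\<forall>P. in_cyclic_hull n g P \<longrightarrow> P = 0"
  shows "self_reciprocal g"
proof -
  obtain h where X: "g * h = monom 1 n - 1" using g by (metis dvdE)
  obtain u v where "(u * g + v * reflect_poly h) dvd g"
    and "(u * g + v * reflect_poly h) dvd reflect_poly h"
    by (rule bezout_common_divisor)
  then have "is_unit (u * g + v * reflect_poly h)"
    using n X trivial by (intro is_unit_common_divisor_if_cyclic_hull_trivial)
  then obtain w where "1 = (u * g + v * reflect_poly h) * w" by (elim dvdE)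
  then have "(w * u) * g + (w * v) * reflect_poly h = 1" by (simp add: algebra_simps)
  moreover have "g dvd reflect_poly h * reflect_poly g"
  proof -
    have "reflect_poly h * reflect_poly g = - (monom 1 n - 1)"
      using X n by (metis reflect_poly_mult mult.commute reflect_poly_monom_1_minus_1)
    then show ?thesis using g by (simp only: dvd_minus_iff)
  qed
  ultimately have "g dvd reflect_poly g" by (rule dvd_mult_imp_dvd_if_bezout)
  moreover have "coeff g 0 \<noteq> 0" using n g by (rule coeff_0_neq_0_if_dvd_monom_1_minus_1)
  ultimately show ?thesis by (intro self_reciprocal_if_dvd_reflect_poly)
qed

lemma is_LCD_cyclic_code_iff_self_reciprocal:
  fixes g :: "'a::field poly"
  assumes char: "of_nat n \<noteq> (0::'a)" and g: "g dvd monom 1 n - 1"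
  shows "is_LCD_code n (cyclic_code n g) \<longleftrightarrow> self_reciprocal g"
proof -
  have n: "n \<ge> 1" using char by (cases n) auto
  show ?thesis
    unfolding is_LCD_cyclic_code_iff[OF n g]
    using in_cyclic_hull_self_reciprocal_eq_0[OF squarefree_monom_1_minus_1[OF char]]
      self_reciprocal_if_cyclic_hull_trivial[OF n g] by blast
qed

section \<open>Decomposition of codes over \<open>R\<^sub>e\<^sub>,\<^sub>q\<close>\<close>

lemma zero_in_cyclic_code: "(\<lambda>j. 0) \<in> cyclic_code n g"
  unfolding cyclic_code_def by (auto simp: fun_eq_iff intro: exI[of _ 0])

lemma cyclic_code_vanishes:
  fixes g :: "'a::field poly"
  assumes "n \<ge> 1" and "c \<in> cyclic_code n g" and "j \<ge> n"
  shows "c j = 0"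
proof -
  obtain f where "c = coeff ((f * g) mod (monom 1 n - 1))"
    using assms(2) unfolding cyclic_code_def by blast
  then show ?thesis
    using degree_mod_monom_1_minus_1[OF assms(1), of "f * g"] assms(3) by (simp add: coeff_eq_0)
qed

definition mu_sum :: "nat \<Rightarrow> (nat \<Rightarrow> 'a::field) \<Rightarrow> (nat \<Rightarrow> nat \<Rightarrow> 'a) \<Rightarrow> nat \<Rightarrow> 'a poly" where
  "mu_sum e \<alpha> s = (\<lambda>j. Rmod e (\<Sum>i=1..e. mu e \<alpha> i * [:s i j:]))"

lemma code_R_eq: "code_R e \<alpha> n g = {mu_sum e \<alpha> s | s. \<forall>i\<in>{1..e}. s i \<in> cyclic_code n (g i)}"
  unfolding code_R_def mu_sum_def by simp

lemma Rmod_mu_sum: "Rmod e (mu_sum e \<alpha> s j) = mu_sum e \<alpha> s j"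
  by (simp add: mu_sum_def Rmod_def)

lemma ball_code_R_iff:
  "(\<forall>x\<in>code_R e \<alpha> n g. P x) \<longleftrightarrow>
    (\<forall>s. (\<forall>i\<in>{1..e}. s i \<in> cyclic_code n (g i)) \<longrightarrow> P (mu_sum e \<alpha> s))"
  unfolding code_R_eq by blast

lemma mu_sum_in_code_R:
  "\<forall>i\<in>{1..e}. s i \<in> cyclic_code n (g i) \<Longrightarrow> mu_sum e \<alpha> s \<in> code_R e \<alpha> n g"
  unfolding code_R_eq by blast

lemma mu_sum_in_Rvecs:
  assumes "\<forall>i\<in>{1..e}. \<forall>j\<ge>n. s i j = 0"
  shows "mu_sum e \<alpha> s \<in> Rvecs e n"
  using assms unfolding Rvecs_def by (auto simp: Rmod_mu_sum mu_sum_def Rmod_def)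

text \<open>Evaluation at the roots \<open>\<alpha> k\<close> is the Chinese remainder isomorphism
  \<open>R\<^sub>e\<^sub>,\<^sub>q \<cong> F\<^sub>q\<^sup>e\<close>, and it sends \<open>\<mu> i\<close> to the \<open>i\<close>-th unit vector.\<close>

locale ue1_splitting =
  fixes e :: nat and \<alpha> :: "nat \<Rightarrow> 'a::field"
  assumes ue1_eq_prod: "ue1 e = (\<Prod>i=1..e. [:- \<alpha> i, 1:])"
    and inj_on_roots: "inj_on \<alpha> {1..e}"
begin

lemma poly_Rmod:
  assumes "k \<in> {1..e}"
  shows "poly (Rmod e f) (\<alpha> k) = poly f (\<alpha> k)"
proof -
  have "poly (ue1 e) (\<alpha> k) = 0"
    using assms unfolding ue1_eq_prod poly_prod by (intro prod_zero) auto
  moreover have "f mod ue1 e = f - f div ue1 e * ue1 e" by (simp add: minus_div_mult_eq_mod)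
  ultimately show ?thesis unfolding Rmod_def by simp
qed

lemma degree_ue1: "degree (ue1 e :: 'a poly) = e"
  unfolding ue1_eq_prod by (subst degree_prod_eq_sum_degree) auto

lemma Rmod_eq_0_iff: "Rmod e f = 0 \<longleftrightarrow> (\<forall>k\<in>{1..e}. poly f (\<alpha> k) = 0)"
proof
  assume "\<forall>k\<in>{1..e}. poly f (\<alpha> k) = 0"
  show "Rmod e f = 0"
  proof (rule ccontr)
    assume "Rmod e f \<noteq> 0"
    then have "degree (Rmod e f) < card (\<alpha> ` {1..e})"
      using degree_mod_less[of "ue1 e" f] degree_ue1 inj_on_roots
      by (auto simp: Rmod_def card_image ue1_eq_prod)
    then have "Rmod e f = 0"
      using \<open>\<forall>k\<in>{1..e}. poly f (\<alpha> k) = 0\<close> by (intro poly_eqI_degree) (auto simp: poly_Rmod)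
    with \<open>Rmod e f \<noteq> 0\<close> show False ..
  qed
next
  assume "Rmod e f = 0"
  show "\<forall>k\<in>{1..e}. poly f (\<alpha> k) = 0"
  proof
    fix k assume "k \<in> {1..e}"
    then have "poly f (\<alpha> k) = poly (Rmod e f) (\<alpha> k)" by (simp add: poly_Rmod)
    with \<open>Rmod e f = 0\<close> show "poly f (\<alpha> k) = 0" by simp
  qed
qed

lemma Ghat_eq_prod:
  assumes "i \<in> {1..e}"
  shows "Ghat e \<alpha> i = (\<Prod>l\<in>{1..e} - {i}. [:- \<alpha> l, 1:])"
proof -
  have ue1: "ue1 e = Gpol \<alpha> i * (\<Prod>l\<in>{1..e} - {i}. [:- \<alpha> l, 1:])"
    using assms unfolding ue1_eq_prod Gpol_def by (simp add: prod.remove)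
  show ?thesis unfolding Ghat_def ue1 by (rule nonzero_mult_div_cancel_left) (simp add: Gpol_def)
qed

lemma poly_Ghat_eq_0_iff:
  assumes "i \<in> {1..e}" and "k \<in> {1..e}"
  shows "poly (Ghat e \<alpha> i) (\<alpha> k) = 0 \<longleftrightarrow> k \<noteq> i"
  using assms inj_on_roots unfolding Ghat_eq_prod[OF assms(1)] poly_prod
  by (auto simp: inj_on_eq_iff)

text \<open>\<^const>\<open>hpol\<close> is chosen by \<open>SOME\<close>; a constant witness exists because
  \<^const>\<open>Ghat\<close> does not vanish at \<open>\<alpha> i\<close>.\<close>

lemma hpol_bezout:
  assumes "i \<in> {1..e}"
  shows "\<exists>z. z * Gpol \<alpha> i + hpol e \<alpha> i * Ghat e \<alpha> i = 1"
proof -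
  define h where "h = [:inverse (poly (Ghat e \<alpha> i) (\<alpha> i)):]"
  have "poly (1 - h * Ghat e \<alpha> i) (\<alpha> i) = 0"
    using poly_Ghat_eq_0_iff[OF assms assms] by (simp add: h_def)
  then have "Gpol \<alpha> i dvd 1 - h * Ghat e \<alpha> i" unfolding Gpol_def by (simp only: poly_eq_0_iff_dvd)
  then obtain z where "1 - h * Ghat e \<alpha> i = Gpol \<alpha> i * z" by (elim dvdE)
  then have "\<exists>h z. z * Gpol \<alpha> i + h * Ghat e \<alpha> i = 1" by (metis diff_eq_eq mult.commute)
  then show ?thesis unfolding hpol_def by (rule someI_ex)
qed

lemma poly_mu:
  assumes "i \<in> {1..e}" and "k \<in> {1..e}"
  shows "poly (mu e \<alpha> i) (\<alpha> k) = (if i = k then 1 else 0)"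
proof -
  obtain z where z: "z * Gpol \<alpha> i + hpol e \<alpha> i * Ghat e \<alpha> i = 1"
    using hpol_bezout[OF assms(1)] by blast
  have "poly (mu e \<alpha> i) (\<alpha> k) = poly (hpol e \<alpha> i * Ghat e \<alpha> i) (\<alpha> k)"
    unfolding mu_def using assms(2) by (rule poly_Rmod)
  also have "\<dots> = (if i = k then 1 else 0)"
  proof (cases "i = k")
    case True
    have "poly (z * Gpol \<alpha> i + hpol e \<alpha> i * Ghat e \<alpha> i) (\<alpha> i) = 1" by (simp add: z)
    then show ?thesis using True by (simp add: Gpol_def)
  qed (use poly_Ghat_eq_0_iff[OF assms] in simp)
  finally show ?thesis .
qed

lemma poly_mu_sum:
  assumes "k \<in> {1..e}"
  shows "poly (mu_sum e \<alpha> s j) (\<alpha> k) = s k j"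
proof -
  have "poly (mu_sum e \<alpha> s j) (\<alpha> k) = (\<Sum>i=1..e. poly (mu e \<alpha> i) (\<alpha> k) * s i j)"
    unfolding mu_sum_def poly_Rmod[OF assms] poly_sum by (simp add: mult.commute)
  also have "\<dots> = (\<Sum>i=1..e. if i = k then s i j else 0)"
    using assms by (intro sum.cong) (simp_all add: poly_mu)
  also have "\<dots> = s k j" using assms by simp
  finally show ?thesis .
qed

lemma mu_sum_eq_0_iff: "mu_sum e \<alpha> s = (\<lambda>j. 0) \<longleftrightarrow> (\<forall>k\<in>{1..e}. s k = (\<lambda>j. 0))"
proof
  assume "mu_sum e \<alpha> s = (\<lambda>j. 0)"
  then show "\<forall>k\<in>{1..e}. s k = (\<lambda>j. 0)" by (metis poly_0 poly_mu_sum)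
next
  assume "\<forall>k\<in>{1..e}. s k = (\<lambda>j. 0)"
  show "mu_sum e \<alpha> s = (\<lambda>j. 0)"
  proof
    fix j
    have "Rmod e (mu_sum e \<alpha> s j) = 0"
      using \<open>\<forall>k\<in>{1..e}. s k = (\<lambda>j. 0)\<close> by (simp add: Rmod_eq_0_iff poly_mu_sum)
    then show "mu_sum e \<alpha> s j = 0" by (simp add: Rmod_mu_sum)
  qed
qed

lemma Rinner_eq_0_iff:
  "Rinner e n x y = 0 \<longleftrightarrow> (\<forall>k\<in>{1..e}. (\<Sum>j<n. poly (x j) (\<alpha> k) * poly (y j) (\<alpha> k)) = 0)"
  unfolding Rinner_def Rmod_eq_0_iff by (simp add: poly_sum)

lemma mu_sum_in_Rdual_code_R_iff:
  fixes g :: "nat \<Rightarrow> 'a poly"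
  assumes n: "n \<ge> 1" and s: "\<forall>i\<in>{1..e}. s i \<in> cyclic_code n (g i)"
  shows "mu_sum e \<alpha> s \<in> Rdual e n (code_R e \<alpha> n g) \<longleftrightarrow>
    (\<forall>k\<in>{1..e}. \<forall>c\<in>cyclic_code n (g k). (\<Sum>j<n. c j * s k j) = 0)"
proof
  assume dual: "mu_sum e \<alpha> s \<in> Rdual e n (code_R e \<alpha> n g)"
  show "\<forall>k\<in>{1..e}. \<forall>c\<in>cyclic_code n (g k). (\<Sum>j<n. c j * s k j) = 0"
  proof (intro ballI)
    fix k c assume k: "k \<in> {1..e}" and c: "c \<in> cyclic_code n (g k)"
    let ?s' = "(\<lambda>_ _. 0)(k := c)"
    have "mu_sum e \<alpha> ?s' \<in> code_R e \<alpha> n g"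
      using c zero_in_cyclic_code by (intro mu_sum_in_code_R) auto
    then have "Rinner e n (mu_sum e \<alpha> ?s') (mu_sum e \<alpha> s) = 0"
      using dual unfolding Rdual_def by blast
    then have "\<forall>k'\<in>{1..e}. (\<Sum>j<n. ?s' k' j * s k' j) = 0"
      by (simp add: Rinner_eq_0_iff poly_mu_sum)
    from this[rule_format, OF k] show "(\<Sum>j<n. c j * s k j) = 0" by simp
  qed
next
  assume orth: "\<forall>k\<in>{1..e}. \<forall>c\<in>cyclic_code n (g k). (\<Sum>j<n. c j * s k j) = 0"
  have "mu_sum e \<alpha> s \<in> Rvecs e n"
    using s cyclic_code_vanishes[OF n] by (intro mu_sum_in_Rvecs) blast
  moreover have "Rinner e n x (mu_sum e \<alpha> s) = 0" if hx: "x \<in> code_R e \<alpha> n g" for x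
  proof -
    obtain s' where x: "x = mu_sum e \<alpha> s'" and s': "\<forall>i\<in>{1..e}. s' i \<in> cyclic_code n (g i)"
      using hx unfolding code_R_eq by blast
    show ?thesis unfolding x Rinner_eq_0_iff using orth s' by (simp add: poly_mu_sum)
  qed
  ultimately show "mu_sum e \<alpha> s \<in> Rdual e n (code_R e \<alpha> n g)" unfolding Rdual_def by blast
qed

lemma is_LCD_code_R_iff:
  fixes g :: "nat \<Rightarrow> 'a poly"
  assumes n: "n \<ge> 1"
  shows "is_LCD e n (code_R e \<alpha> n g) \<longleftrightarrow> (\<forall>k\<in>{1..e}. is_LCD_code n (cyclic_code n (g k)))"
proof -
  let ?C = "code_R e \<alpha> n g"
  have zero: "\<forall>i\<in>{1..e}. (\<lambda>_ _. 0) i \<in> cyclic_code n (g i)"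
    by (simp add: zero_in_cyclic_code)
  have "mu_sum e \<alpha> (\<lambda>_ _. 0) \<in> ?C \<inter> Rdual e n ?C"
    using mu_sum_in_code_R[OF zero] mu_sum_in_Rdual_code_R_iff[OF n zero] by simp
  moreover have "mu_sum e \<alpha> (\<lambda>_ _. 0) = (\<lambda>j. 0)" by (simp add: mu_sum_eq_0_iff)
  ultimately have "is_LCD e n ?C \<longleftrightarrow> (\<forall>y\<in>?C. y \<in> Rdual e n ?C \<longrightarrow> y = (\<lambda>j. 0))"
    unfolding is_LCD_def by auto
  also have "\<dots> \<longleftrightarrow> (\<forall>s. (\<forall>i\<in>{1..e}. s i \<in> cyclic_code n (g i)) \<longrightarrow>
      (\<forall>k\<in>{1..e}. \<forall>c\<in>cyclic_code n (g k). (\<Sum>j<n. c j * s k j) = 0) \<longrightarrow>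
      (\<forall>k\<in>{1..e}. s k = (\<lambda>j. 0)))"
    unfolding ball_code_R_iff using mu_sum_in_Rdual_code_R_iff[OF n] by (simp add: mu_sum_eq_0_iff)
  also have "\<dots> \<longleftrightarrow> (\<forall>k\<in>{1..e}. is_LCD_code n (cyclic_code n (g k)))"
    using zero_in_cyclic_code by (intro all_components_orthogonal_iff_is_LCD_code) blast
  finally show ?thesis .
qed

end

section \<open>Characteristic of a finite ring\<close>

text \<open>Adding 1 permutes a finite ring, so the sum of all its elements does not change.\<close>

lemma of_nat_card_UNIV_eq_0: "of_nat (card (UNIV :: 'a set)) = (0::'a::{ring_1,finite})"
proof -
  have "(\<Sum>x\<in>UNIV. x + 1) = (\<Sum>x\<in>UNIV. x :: 'a)"
    by (rule sum.reindex_bij_witness[of _ "\<lambda>x. x - 1" "\<lambda>x. x + 1"]) auto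
  then show ?thesis by (simp add: sum.distrib)
qed

lemma of_nat_neq_0_if_coprime_card_UNIV:
  assumes "coprime N (card (UNIV :: 'a set))"
  shows "of_nat N \<noteq> (0::'a::{ring_1,finite})"
proof
  assume "of_nat N = (0::'a)"
  then have "CHAR('a) dvd N" by (simp add: of_nat_eq_0_iff_char_dvd)
  moreover have "CHAR('a) dvd card (UNIV :: 'a set)"
    using of_nat_card_UNIV_eq_0[where 'a='a] by (simp add: of_nat_eq_0_iff_char_dvd)
  ultimately have "CHAR('a) = 1" using assms by (metis coprime_common_divisor_nat)
  then show False using of_nat_CHAR[where 'a='a] by simp
qed

text \<open>The hypotheses on \<open>q\<close> enter only through \<open>q = e t + 1\<close> and \<open>gcd(n, q) = 1\<close>,
  which make \<open>e\<close> and \<open>n\<close> units in \<open>F\<^sub>q\<close>.\<close>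

theorem corollary4p6:
  fixes p m q e t n :: nat
    and \<alpha> :: "nat \<Rightarrow> 'a::{field,finite}"
    and g :: "nat \<Rightarrow> 'a poly"
  assumes "prime p" and "odd p"
    and "q = p ^ m" and "card (UNIV :: 'a set) = q"
    and "q = e * t + 1" and "e \<ge> 2" and "t \<ge> 1"
    and "ue1 e = (\<Prod>i=1..e. [:- \<alpha> i, 1:])"
    and "coprime n q"
    and "\<forall>i\<in>{1..e}. lead_coeff (g i) = 1 \<and> g i dvd (monom 1 n - 1)"
  shows "is_LCD e n (code_R e \<alpha> n g) \<longleftrightarrow> (\<forall>i\<in>{1..e}. self_reciprocal (g i))"
proof -
  have "coprime e q" using assms(5) by (metis coprime_add_one_right coprime_mult_left_iff)
  then have char_e: "of_nat e \<noteq> (0::'a)" using assms(4) by (metis of_nat_neq_0_if_coprime_card_UNIV)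
  have char_n: "of_nat n \<noteq> (0::'a)" using assms(4,9) by (metis of_nat_neq_0_if_coprime_card_UNIV)
  then have "n \<ge> 1" by (cases n) auto
  have "inj_on \<alpha> {1..e}"
    using squarefree_monom_1_minus_1[OF char_e] assms(8) unfolding ue1_def
    by (intro inj_on_if_squarefree_prod_linear) simp_all
  with assms(8) interpret ue1_splitting e \<alpha> by unfold_locales
  have "is_LCD e n (code_R e \<alpha> n g) \<longleftrightarrow> (\<forall>i\<in>{1..e}. is_LCD_code n (cyclic_code n (g i)))"
    using \<open>n \<ge> 1\<close> by (rule is_LCD_code_R_iff)
  also have "\<dots> \<longleftrightarrow> (\<forall>i\<in>{1..e}. self_reciprocal (g i))"
    using is_LCD_cyclic_code_iff_self_reciprocal[OF char_n] assms(10) by auto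
  finally show ?thesis .
qed

end
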